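(* Let $S,T$ be numerical semigroups, $w$ a positive integer and $f$ a polynomial with nonnegative integer coefficients such that $\mathrm H_S(x^w)f(x)=\mathrm H_T(x)$. Let $u$ be the greatest common divisor of the exponents of the monomials occurring in $f$ with nonzero coefficient. If $u\in S$, then there exists a numerical semigroup $U$ such that $T$ is the gluing $T=uU+_{uw}wS$, that is, $T=uU+wS$ and $uw\in uU\cap wS$.
   Context: A numerical semigroup is a submonoid of $(\mathbb N,+)$ with finite complement in $\mathbb N$; $aA=\{ax:x\in A\}$ and $A+B=\{x+y:x\in A,y\in B\}$. $\mathrm H_S(x)=\sum_{s\in S}x^s$. For submonoids $T_1,T_2$ of $\mathbb N$ with $d_i=\gcd(T_i)$, a submonoid $T$ is the gluing $T=T_1+_dT_2$, $d=\mathrm{lcm}(d_1,d_2)$, if $T=T_1+T_2$ and $\mathrm{lcm}(d_1,d_2)\in T_1\cap T_2$. *)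

theory Defs
  imports "HOL-Computational_Algebra.Computational_Algebra"
begin

definition numerical_semigroup :: "nat set \<Rightarrow> bool" where
  "numerical_semigroup S \<longleftrightarrow> 0 \<in> S \<and> (\<forall>a\<in>S. \<forall>b\<in>S. a + b \<in> S) \<and> finite (UNIV - S)"

definition hilb :: "nat set \<Rightarrow> nat fps" where
  "hilb S = Abs_fps (\<lambda>n. if n \<in> S then 1 else 0)"

definition dil :: "nat \<Rightarrow> nat set \<Rightarrow> nat set" where
  "dil a A = (\<lambda>x. a * x) ` A"

definition msum :: "nat set \<Rightarrow> nat set \<Rightarrow> nat set" where
  "msum A B = {x + y | x y. x \<in> A \<and> y \<in> B}"

end

theory Submission
  imports Defs
begin

text \<open>Comparing coefficients, the identity H_S(x^w) f(x) = H_T(x) says exactly that T is the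
  Minkowski sum of the support of f and wS. Every exponent in the support is a multiple of u and
  lies in T (as 0 \<in> S), so T = uU + wS for U = {n. un \<in> T}, which is a numerical semigroup because
  T is one. Finally uw = 0 + w u \<in> T puts w into U, and u \<in> S puts uw into wS.\<close>

lemma fps_compose_fps_X_power_nth:
  fixes F :: "'a::semiring_1 fps"
  assumes "w > 0"
  shows "(F oo fps_X ^ w) $ n = (if w dvd n then F $ (n div w) else 0)"
proof -
  have X_pow: "(fps_X ^ w :: 'a fps) ^ i $ n = (if i = n div w \<and> w dvd n then 1 else 0)" for i
    using assms by (auto simp: power_mult[symmetric] fps_X_power_nth)
  have "n div w \<le> n" by simp
  then show ?thesis
    by (simp add: fps_compose_nth X_pow if_distrib[of "(*) _"] sum.delta' cong: if_cong)
qed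

lemma fps_mult_nth_neq_0_iff:
  fixes F G :: "'a::{canonically_ordered_monoid_add, semiring_no_zero_divisors} fps"
  shows "(F * G) $ n \<noteq> 0 \<longleftrightarrow> (\<exists>i\<le>n. F $ i \<noteq> 0 \<and> G $ (n - i) \<noteq> 0)"
  by (auto simp: fps_mult_nth sum_eq_0_iff)

lemma hilb_nth: "hilb S $ n = (if n \<in> S then 1 else 0)"
  by (simp add: hilb_def)

lemma hilb_compose_fps_X_power_nth_neq_0_iff:
  assumes "w > 0"
  shows "(hilb S oo fps_X ^ w) $ n \<noteq> 0 \<longleftrightarrow> w dvd n \<and> n div w \<in> S"
  by (simp add: fps_compose_fps_X_power_nth[OF assms] hilb_nth split: if_splits)

lemma hilb_compose_mult_eq_hilb_imp_msum:
  fixes F :: "nat fps"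
  assumes "w > 0" and "(hilb S oo fps_X ^ w) * F = hilb T"
  shows "T = msum {n. F $ n \<noteq> 0} (dil w S)"
proof -
  have "n \<in> T \<longleftrightarrow> ((hilb S oo fps_X ^ w) * F) $ n \<noteq> 0" for n
    by (simp add: assms(2) hilb_nth)
  also have "\<dots> n \<longleftrightarrow> (\<exists>i\<le>n. (w dvd i \<and> i div w \<in> S) \<and> F $ (n - i) \<noteq> 0)" for n
    by (simp only: fps_mult_nth_neq_0_iff hilb_compose_fps_X_power_nth_neq_0_iff[OF assms(1)])
  also have "\<dots> n \<longleftrightarrow> n \<in> msum {n. F $ n \<noteq> 0} (dil w S)" for n
  proof
    assume "\<exists>i\<le>n. (w dvd i \<and> i div w \<in> S) \<and> F $ (n - i) \<noteq> 0"
    then obtain s where "s \<in> S" "w * s \<le> n" "F $ (n - w * s) \<noteq> 0" by auto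
    then show "n \<in> msum {n. F $ n \<noteq> 0} (dil w S)"
      unfolding msum_def dil_def
      by (intro CollectI exI[of _ "n - w * s"] exI[of _ "w * s"]) auto
  next
    assume "n \<in> msum {n. F $ n \<noteq> 0} (dil w S)"
    then obtain a s where "F $ a \<noteq> 0" "s \<in> S" "n = a + w * s"
      unfolding msum_def dil_def by auto
    with assms(1) show "\<exists>i\<le>n. (w dvd i \<and> i div w \<in> S) \<and> F $ (n - i) \<noteq> 0"
      by (auto intro!: exI[of _ "w * s"])
  qed
  finally show ?thesis by blast
qed

lemma numerical_semigroup_preimage_mult:
  assumes "numerical_semigroup T"
  shows "numerical_semigroup {n. u * n \<in> T}"
  unfolding numerical_semigroup_def
proof (intro conjI ballI)
  show "0 \<in> {n. u * n \<in> T}"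
    using assms by (simp add: numerical_semigroup_def)
  show "a + b \<in> {n. u * n \<in> T}" if "a \<in> {n. u * n \<in> T}" "b \<in> {n. u * n \<in> T}" for a b
    using assms that by (simp add: numerical_semigroup_def distrib_left)
  show "finite (UNIV - {n. u * n \<in> T})"
  proof (cases "u = 0")
    case True
    with assms show ?thesis by (simp add: numerical_semigroup_def)
  next
    case False
    then have "inj ((*) u)" by (simp add: inj_on_def)
    moreover have "UNIV - {n. u * n \<in> T} = (*) u -` (UNIV - T)" by auto
    ultimately show ?thesis
      using assms finite_vimageI by (metis numerical_semigroup_def)
  qed
qed

lemma msum_eq_msum_dil_preimage_mult:
  assumes "T = msum A B" and "0 \<in> A" and "0 \<in> B"
    and "\<And>x y. x \<in> T \<Longrightarrow> y \<in> T \<Longrightarrow> x + y \<in> T"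
    and "\<And>a. a \<in> A \<Longrightarrow> u dvd a"
  shows "T = msum (dil u {n. u * n \<in> T}) B"
proof
  show "T \<subseteq> msum (dil u {n. u * n \<in> T}) B"
  proof
    fix n assume "n \<in> T"
    then obtain a b where "a \<in> A" "b \<in> B" "n = a + b"
      using assms(1) by (auto simp: msum_def)
    moreover obtain m where "a = u * m"
      using assms(5)[OF \<open>a \<in> A\<close>] by blast
    moreover have "a \<in> T"
      using \<open>a \<in> A\<close> assms(1,3) unfolding msum_def by force
    ultimately show "n \<in> msum (dil u {n. u * n \<in> T}) B"
      unfolding msum_def dil_def by blast
  qed
next
  have "B \<subseteq> T"
    using assms(1,2) unfolding msum_def by force
  then show "msum (dil u {n. u * n \<in> T}) B \<subseteq> T"
    using assms(4) unfolding msum_def dil_def by auto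
qed

theorem theorem7:
  fixes S T :: "nat set" and w :: nat and f :: "nat poly"
  assumes "numerical_semigroup S" and "numerical_semigroup T"
    and "w > 0"
    and "(hilb S oo fps_X ^ w) * fps_of_poly f = hilb T"
    and "u = Gcd {n. coeff f n \<noteq> 0}"
    and "u \<in> S"
  shows "\<exists>U. numerical_semigroup U \<and> T = msum (dil u U) (dil w S)
            \<and> u * w \<in> dil u U \<inter> dil w S"
proof -
  define U where "U = {n. u * n \<in> T}"
  have T_msum: "T = msum {n. coeff f n \<noteq> 0} (dil w S)"
    using hilb_compose_mult_eq_hilb_imp_msum[OF assms(3,4)] by simp
  have "0 \<in> S" and "0 \<in> T" and T_add: "\<And>x y. x \<in> T \<Longrightarrow> y \<in> T \<Longrightarrow> x + y \<in> T"
    using assms(1,2) by (auto simp: numerical_semigroup_def)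
  then have "0 \<in> dil w S" and "coeff f 0 \<noteq> 0"
    using T_msum by (auto simp: dil_def msum_def)
  then have T_glued: "T = msum (dil u U) (dil w S)"
    unfolding U_def using T_add assms(5)
    by (intro msum_eq_msum_dil_preimage_mult[OF T_msum]) (auto simp: Gcd_dvd)
  have "w * u \<in> dil w S"
    using assms(6) unfolding dil_def by (rule imageI)
  moreover have "dil w S \<subseteq> T"
    using T_msum \<open>coeff f 0 \<noteq> 0\<close> unfolding msum_def by force
  ultimately have "u * w \<in> T"
    by (auto simp: mult.commute)
  then have "u * w \<in> dil u U"
    unfolding U_def dil_def by (rule imageI[OF CollectI])
  with \<open>w * u \<in> dil w S\<close> have "u * w \<in> dil u U \<inter> dil w S"
    by (simp add: mult.commute)
  moreover have "numerical_semigroup U"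
    unfolding U_def using assms(2) by (rule numerical_semigroup_preimage_mult)
  ultimately show ?thesis
    using T_glued by blast
qed

end
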